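(* Let $G$ and $H$ be ordered graphs, each with $m$ edges, and suppose $M_{1,G}=M_{1,H}$ in $\mathbb C^m$. Then the edge bijection sending the $k$-th edge of $G$ to the $k$-th edge of $H$ (for $k=1,\dots,m$) is a cycle isomorphism.
   Context: An ordered graph is a finite vertex set with a sequence $(E_1,\dots,E_m)$ of distinct unordered pairs of distinct vertices. For a configuration $\mathbf p$ assigning $\mathbf p_i\in\mathbb C$ to each vertex, $m_G(\mathbf p)\in\mathbb C^m$ has $k$-th coordinate $(\mathbf p_i-\mathbf p_j)^2$ with $E_k=\{i,j\}$; $M_{1,G}$ is the Zariski closure of the image of $m_G$. A set of edges is cycle supported if its edges, in some order, form a simple cycle. An edge bijection between two graphs is a cycle isomorphism if a set of edges is cycle supported exactly when its image is cycle supported. *)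

theory Defs
  imports Complex_Main
begin

text \<open>Each edge is stored as a pair (i,j) of distinct vertices standing for the
  unordered pair {i,j}; the unordered pairs of the list are pairwise distinct.\<close>

definition ordered_graph :: "'a set \<Rightarrow> ('a \<times> 'a) list \<Rightarrow> bool" where
  "ordered_graph V E \<longleftrightarrow> finite V \<and>
     (\<forall>(i,j)\<in>set E. i \<in> V \<and> j \<in> V \<and> i \<noteq> j) \<and>
     distinct (map (\<lambda>(i,j). {i,j}) E)"

definition uedge :: "('a \<times> 'a) list \<Rightarrow> nat \<Rightarrow> 'a set" where
  "uedge E k = {fst (E ! k), snd (E ! k)}"

text \<open>The measurement map m_G : configurations \<rightarrow> C^m (points of C^m are lists of length m).\<close>
definition meas_map :: "('a \<times> 'a) list \<Rightarrow> ('a \<Rightarrow> complex) \<Rightarrow> complex list" where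
  "meas_map E p = map (\<lambda>(i,j). (p i - p j)^2) E"

definition meas_image :: "'a set \<Rightarrow> ('a \<times> 'a) list \<Rightarrow> complex list set" where
  "meas_image V E = {meas_map E p | p. \<forall>v. v \<notin> V \<longrightarrow> p v = 0}"

inductive_set poly_fun :: "nat \<Rightarrow> (complex list \<Rightarrow> complex) set" for m :: nat where
  pf_const: "(\<lambda>x. c) \<in> poly_fun m"
| pf_var: "i < m \<Longrightarrow> (\<lambda>x. x ! i) \<in> poly_fun m"
| pf_add: "f \<in> poly_fun m \<Longrightarrow> g \<in> poly_fun m \<Longrightarrow> (\<lambda>x. f x + g x) \<in> poly_fun m"
| pf_mult: "f \<in> poly_fun m \<Longrightarrow> g \<in> poly_fun m \<Longrightarrow> (\<lambda>x. f x * g x) \<in> poly_fun m"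

definition zariski_closure :: "nat \<Rightarrow> complex list set \<Rightarrow> complex list set" where
  "zariski_closure m S = {x. length x = m \<and>
     (\<forall>f\<in>poly_fun m. (\<forall>y\<in>S. f y = 0) \<longrightarrow> f x = 0)}"

definition M1 :: "'a set \<Rightarrow> ('a \<times> 'a) list \<Rightarrow> complex list set" where
  "M1 V E = zariski_closure (length E) (meas_image V E)"

definition cycle_supported :: "'a set set \<Rightarrow> bool" where
  "cycle_supported S \<longleftrightarrow> (\<exists>vs. length vs \<ge> 3 \<and> distinct vs \<and>
     S = {{vs ! i, vs ! ((i + 1) mod length vs)} | i. i < length vs})"

definition index_cycle_iso :: "('a \<times> 'a) list \<Rightarrow> ('b \<times> 'b) list \<Rightarrow> bool" where
  "index_cycle_iso EG EH \<longleftrightarrow> length EG = length EH \<and>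
     (\<forall>K \<subseteq> {..<length EG}.
        cycle_supported (uedge EG ` K) \<longleftrightarrow> cycle_supported (uedge EH ` K))"

end

theory Submission
  imports Defs "HOL-Library.Transitive_Closure_Table"
begin

text \<open>Call a set K of edge indices dependent on M1(G) if some nonzero polynomial in the
  coordinates K vanishes on M1(G). The minimal dependent sets are exactly the edge sets of
  cycles of G, and they are determined by M1(G) alone. A cycle is dependent: the signed edge
  differences p(v_i) - p(v_(i+1)) sum to zero, and multiplying the sum of square roots by all its
  conjugates under the sign changes eliminates the roots, leaving a polynomial in the squared
  differences. An edge set without cycles is independent, since on a forest the edge differences
  (hence their squares) can be prescribed arbitrarily; this applies in particular to every proper
  subset of a cycle.\<close>

section \<open>Eliminating square roots\<close>

text \<open>Polynomials in the coordinates y!i (i \<in> C) and in j further variables a 0, \<dots>, a (j - 1),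
  which play the role of square roots of coordinates.\<close>

inductive_set root_poly :: "nat set \<Rightarrow> nat \<Rightarrow> (complex list \<Rightarrow> (nat \<Rightarrow> complex) \<Rightarrow> complex) set"
  for C :: "nat set" and j :: nat where
  root_poly_const: "(\<lambda>y a. c) \<in> root_poly C j"
| root_poly_coord: "i \<in> C \<Longrightarrow> (\<lambda>y a. y ! i) \<in> root_poly C j"
| root_poly_root: "i < j \<Longrightarrow> (\<lambda>y a. a i) \<in> root_poly C j"
| root_poly_add: "f \<in> root_poly C j \<Longrightarrow> g \<in> root_poly C j \<Longrightarrow> (\<lambda>y a. f y a + g y a) \<in> root_poly C j"
| root_poly_mult: "f \<in> root_poly C j \<Longrightarrow> g \<in> root_poly C j \<Longrightarrow> (\<lambda>y a. f y a * g y a) \<in> root_poly C j"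

lemma root_poly_cong:
  assumes "h \<in> root_poly C j" "\<forall>i\<in>C. y ! i = y' ! i" "\<forall>i<j. a i = a' i"
  shows "h y a = h y' a'"
  using assms by (induction rule: root_poly.induct) auto

lemma root_poly_0_in_poly_fun:
  assumes "h \<in> root_poly C 0" "C \<subseteq> {..<m}"
  shows "(\<lambda>y. h y a) \<in> poly_fun m"
  using assms by (induction rule: root_poly.induct) (auto intro: poly_fun.intros)

lemma root_poly_sum: "n \<le> j \<Longrightarrow> (\<lambda>y a. \<Sum>i<n. a i) \<in> root_poly C j"
proof (induction n)
  case 0
  then show ?case using root_poly_const[of 0] by simp
next
  case (Suc n)
  then show ?case using root_poly_add[OF Suc.IH root_poly_root[of n j C]] by simp
qed

lemma root_poly_linear_in_root:
  assumes "h \<in> root_poly C (Suc j)" "c \<in> C"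
  shows "\<exists>A\<in>root_poly C j. \<exists>B\<in>root_poly C j.
     \<forall>y a. (a j)^2 = y ! c \<longrightarrow> h y a = A y a + B y a * a j"
  using assms
proof (induction rule: root_poly.induct)
  case (root_poly_const c')
  show ?case by (intro bexI[of _ "\<lambda>y a. c'"] bexI[of _ "\<lambda>y a. 0"]) (auto intro: root_poly.intros)
next
  case (root_poly_coord i)
  then show ?case
    by (intro bexI[of _ "\<lambda>y a. y ! i"] bexI[of _ "\<lambda>y a. 0"]) (auto intro: root_poly.intros)
next
  case (root_poly_root i)
  show ?case
  proof (cases "i < j")
    case True
    then show ?thesis
      by (intro bexI[of _ "\<lambda>y a. a i"] bexI[of _ "\<lambda>y a. 0"]) (auto intro: root_poly.intros)
  next
    case False
    then have "i = j" using root_poly_root by simp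
    then show ?thesis
      by (intro bexI[of _ "\<lambda>y a. 0"] bexI[of _ "\<lambda>y a. 1"]) (auto intro: root_poly.intros)
  qed
next
  case (root_poly_add f g)
  then obtain A1 B1 A2 B2 where AB: "A1 \<in> root_poly C j" "B1 \<in> root_poly C j"
    "A2 \<in> root_poly C j" "B2 \<in> root_poly C j"
    "\<forall>y a. (a j)^2 = y ! c \<longrightarrow> f y a = A1 y a + B1 y a * a j"
    "\<forall>y a. (a j)^2 = y ! c \<longrightarrow> g y a = A2 y a + B2 y a * a j" by blast
  have memA: "(\<lambda>y a. A1 y a + A2 y a) \<in> root_poly C j"
    and memB: "(\<lambda>y a. B1 y a + B2 y a) \<in> root_poly C j"
    using AB by (auto intro!: root_poly.intros)
  show ?case
    by (rule bexI[OF bexI[OF _ memB] memA]) (simp add: AB(5,6) algebra_simps)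
next
  case (root_poly_mult f g)
  then obtain A1 B1 A2 B2 where AB: "A1 \<in> root_poly C j" "B1 \<in> root_poly C j"
    "A2 \<in> root_poly C j" "B2 \<in> root_poly C j"
    "\<forall>y a. (a j)^2 = y ! c \<longrightarrow> f y a = A1 y a + B1 y a * a j"
    "\<forall>y a. (a j)^2 = y ! c \<longrightarrow> g y a = A2 y a + B2 y a * a j" by blast
  have memA: "(\<lambda>y a. A1 y a * A2 y a + B1 y a * B2 y a * y ! c) \<in> root_poly C j"
    and memB: "(\<lambda>y a. A1 y a * B2 y a + B1 y a * A2 y a) \<in> root_poly C j"
    using AB root_poly_mult.prems by (auto intro!: root_poly.intros)
  have "f y a * g y a =
      (A1 y a * A2 y a + B1 y a * B2 y a * y ! c) + (A1 y a * B2 y a + B1 y a * A2 y a) * a j"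
    if root: "(a j)^2 = y ! c" for y a
  proof -
    have "f y a * g y a = (A1 y a + B1 y a * a j) * (A2 y a + B2 y a * a j)"
      using AB root by simp
    also have "\<dots> = A1 y a * A2 y a + B1 y a * B2 y a * (a j)^2
        + (A1 y a * B2 y a + B1 y a * A2 y a) * a j"
      by (simp add: algebra_simps power2_eq_square)
    finally show ?thesis using root by simp
  qed
  then show ?case by (intro bexI[OF bexI[OF _ memB] memA]) simp
qed

lemma root_poly_norm:
  assumes "h \<in> root_poly C (Suc j)" "c \<in> C"
  shows "\<exists>N\<in>root_poly C j. \<forall>y a. (a j)^2 = y ! c \<longrightarrow> N y a = h y a * h y (a(j := - a j))"
proof -
  obtain A B where AB: "A \<in> root_poly C j" "B \<in> root_poly C j"
    "\<forall>y a. (a j)^2 = y ! c \<longrightarrow> h y a = A y a + B y a * a j"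
    using root_poly_linear_in_root[OF assms] by blast
  have mem: "(\<lambda>y a. A y a * A y a + (-1) * (B y a * B y a * y ! c)) \<in> root_poly C j"
    using AB assms(2) by (intro root_poly.intros) auto
  have "A y a * A y a + (-1) * (B y a * B y a * y ! c) = h y a * h y (a(j := - a j))"
    if root: "(a j)^2 = y ! c" for y a
  proof -
    have "A y (a(j := - a j)) = A y a" "B y (a(j := - a j)) = B y a"
      using root_poly_cong[OF AB(1)] root_poly_cong[OF AB(2)] by auto
    then have "h y a * h y (a(j := - a j)) = (A y a + B y a * a j) * (A y a - B y a * a j)"
      using AB(3) root by simp
    also have "\<dots> = A y a * A y a - B y a * B y a * (a j)^2"
      by (simp add: algebra_simps power2_eq_square)
    finally show ?thesis using root by simp
  qed
  then show ?thesis by (intro bexI[OF _ mem]) auto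
qed

text \<open>Induction downwards on the number of roots still present, multiplying by the conjugate
  under a j \<mapsto> -a j at each step; at the end g y0 is the product of \<Sum>i<n. \<pm>a i over all signs.\<close>

lemma root_poly_eliminate:
  fixes c :: "nat \<Rightarrow> nat" and y0 :: "complex list"
  assumes cC: "\<forall>i<n. c i \<in> C"
    and nz: "\<forall>a. (\<forall>i<n. (a i)^2 = y0 ! c i) \<longrightarrow> (\<Sum>i<n. a i) \<noteq> 0"
  shows "\<exists>g\<in>root_poly C 0.
     (\<forall>y a. (\<forall>i<n. (a i)^2 = y ! c i) \<and> (\<Sum>i<n. a i) = 0 \<longrightarrow> g y a = 0) \<and>
     (\<forall>a. (\<forall>i<n. (a i)^2 = y0 ! c i) \<longrightarrow> g y0 a \<noteq> 0)"
proof -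
  define P where "P j \<longleftrightarrow> (\<exists>g\<in>root_poly C j.
     (\<forall>y a. (\<forall>i<n. (a i)^2 = y ! c i) \<and> (\<Sum>i<n. a i) = 0 \<longrightarrow> g y a = 0) \<and>
     (\<forall>a. (\<forall>i<n. (a i)^2 = y0 ! c i) \<longrightarrow> g y0 a \<noteq> 0))" for j
  have "P n" unfolding P_def
    by (rule bexI[OF _ root_poly_sum[OF order_refl]]) (use nz in auto)
  have "P 0"
  proof (rule inc_induct[of 0 n P])
    fix j assume j: "j < n" and "P (Suc j)"
    then obtain g where g: "g \<in> root_poly C (Suc j)"
      "\<forall>y a. (\<forall>i<n. (a i)^2 = y ! c i) \<and> (\<Sum>i<n. a i) = 0 \<longrightarrow> g y a = 0"
      "\<forall>a. (\<forall>i<n. (a i)^2 = y0 ! c i) \<longrightarrow> g y0 a \<noteq> 0" unfolding P_def by blast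
    obtain N where N: "N \<in> root_poly C j"
      "\<forall>y a. (a j)^2 = y ! c j \<longrightarrow> N y a = g y a * g y (a(j := - a j))"
      using root_poly_norm[OF g(1), of "c j"] cC j by blast
    have flip: "\<forall>i<n. ((a(j := - a j)) i)^2 = y ! c i"
      if "\<forall>i<n. (a i)^2 = y ! c i" for a :: "nat \<Rightarrow> complex" and y
      using that j by simp
    show "P j" unfolding P_def
    proof (rule bexI[OF _ N(1)], intro conjI allI impI)
      fix y and a :: "nat \<Rightarrow> complex"
      assume "(\<forall>i<n. (a i)^2 = y ! c i) \<and> (\<Sum>i<n. a i) = 0"
      then show "N y a = 0" using N(2) g(2) j by auto
    next
      fix a :: "nat \<Rightarrow> complex"
      assume roots: "\<forall>i<n. (a i)^2 = y0 ! c i"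
      then show "N y0 a \<noteq> 0" using N(2) g(3) flip[OF roots] j by auto
    qed
  qed (use \<open>P n\<close> in simp_all)
  then show ?thesis unfolding P_def .
qed

lemma sum_of_roots_eliminant:
  fixes c :: "nat \<Rightarrow> nat" and y0 :: "complex list"
  assumes c: "\<forall>i<n. c i < m"
    and nz: "\<forall>a. (\<forall>i<n. (a i)^2 = y0 ! c i) \<longrightarrow> (\<Sum>i<n. a i) \<noteq> 0"
  shows "\<exists>f\<in>poly_fun m. (\<forall>x y. (\<forall>i<n. x ! c i = y ! c i) \<longrightarrow> f x = f y) \<and>
     (\<forall>y a. (\<forall>i<n. (a i)^2 = y ! c i) \<and> (\<Sum>i<n. a i) = 0 \<longrightarrow> f y = 0) \<and> f y0 \<noteq> 0"
proof -
  obtain g where g: "g \<in> root_poly (c ` {..<n}) 0"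
    "\<forall>y a. (\<forall>i<n. (a i)^2 = y ! c i) \<and> (\<Sum>i<n. a i) = 0 \<longrightarrow> g y a = 0"
    "\<forall>a. (\<forall>i<n. (a i)^2 = y0 ! c i) \<longrightarrow> g y0 a \<noteq> 0"
    using root_poly_eliminate[of n c "c ` {..<n}" y0] nz by blast
  define a0 where "a0 i = csqrt (y0 ! c i)" for i
  have cong: "g y a = g y' a'" if "\<forall>i<n. y ! c i = y' ! c i" for y y' a a'
    using root_poly_cong[OF g(1)] that by auto
  show ?thesis
  proof (intro bexI[of _ "\<lambda>y. g y a0"] conjI allI impI)
    show "(\<lambda>y. g y a0) \<in> poly_fun m"
      using root_poly_0_in_poly_fun[OF g(1)] c by auto
    show "g y0 a0 \<noteq> 0" using g(3) by (simp add: a0_def)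
    show "g y a0 = 0" if "(\<forall>i<n. (a i)^2 = y ! c i) \<and> (\<Sum>i<n. a i) = 0" for y a
      using that g(2) cong[of y y a0 a] by simp
  qed (use cong in blast)
qed

lemma meas_map_nth: "k < length E \<Longrightarrow> meas_map E p ! k = (p (fst (E!k)) - p (snd (E!k)))^2"
  by (simp add: meas_map_def case_prod_beta)

lemma length_meas_map [simp]: "length (meas_map E p) = length E"
  by (simp add: meas_map_def)

lemma ordered_graph_edge:
  assumes "ordered_graph V E" "k < length E"
  shows "fst (E!k) \<in> V" "snd (E!k) \<in> V" "fst (E!k) \<noteq> snd (E!k)"
  using assms nth_mem[OF assms(2)] unfolding ordered_graph_def by (auto simp: case_prod_beta)

lemma ordered_graph_uedge_inj:
  assumes "ordered_graph V E" "k < length E" "k' < length E" "uedge E k = uedge E k'"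
  shows "k = k'"
proof -
  have "distinct (map (\<lambda>(i,j). {i,j}) E)" using assms(1) unfolding ordered_graph_def by blast
  moreover have "map (\<lambda>(i,j). {i,j}) E ! k = map (\<lambda>(i,j). {i,j}) E ! k'"
    using assms(2-4) by (simp add: uedge_def case_prod_beta)
  ultimately show ?thesis using nth_eq_iff_index_eq assms(2,3) by fastforce
qed

lemma meas_image_subset_M1: "meas_image V E \<subseteq> M1 V E"
  unfolding M1_def zariski_closure_def meas_image_def by auto

lemma vanishes_on_M1_iff:
  assumes "f \<in> poly_fun (length E)"
  shows "(\<forall>z\<in>M1 V E. f z = 0) \<longleftrightarrow> (\<forall>z\<in>meas_image V E. f z = 0)"
  using assms meas_image_subset_M1 unfolding M1_def zariski_closure_def by blast

section \<open>Algebraic dependence of edge coordinates\<close>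

definition coords_dependent :: "complex list set \<Rightarrow> nat \<Rightarrow> nat set \<Rightarrow> bool" where
  "coords_dependent M m K \<longleftrightarrow> (\<exists>f\<in>poly_fun m.
     (\<forall>x y. length x = m \<longrightarrow> length y = m \<longrightarrow> (\<forall>k\<in>K. x!k = y!k) \<longrightarrow> f x = f y) \<and>
     (\<exists>x. length x = m \<and> f x \<noteq> 0) \<and> (\<forall>z\<in>M. f z = 0))"

definition coords_circuit :: "complex list set \<Rightarrow> nat \<Rightarrow> nat set \<Rightarrow> bool" where
  "coords_circuit M m K \<longleftrightarrow> coords_dependent M m K \<and> (\<forall>K'\<subset>K. \<not> coords_dependent M m K')"

definition differences_realizable :: "('a \<times> 'a) list \<Rightarrow> nat set \<Rightarrow> bool" where
  "differences_realizable E K \<longleftrightarrow>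
     (\<forall>d. \<exists>p. \<forall>k\<in>K. p (fst (E!k)) - p (snd (E!k)) = (d k :: complex))"

lemma realizable_not_coords_dependent:
  assumes og: "ordered_graph V E" and K: "K \<subseteq> {..<length E}"
    and r: "differences_realizable E K"
  shows "\<not> coords_dependent (M1 V E) (length E) K"
proof
  assume "coords_dependent (M1 V E) (length E) K"
  then obtain f x where f: "f \<in> poly_fun (length E)"
    "\<forall>x y. length x = length E \<longrightarrow> length y = length E \<longrightarrow> (\<forall>k\<in>K. x!k = y!k) \<longrightarrow> f x = f y"
    "length x = length E" "f x \<noteq> 0" "\<forall>z\<in>M1 V E. f z = 0"
    unfolding coords_dependent_def by blast
  obtain p where p: "\<forall>k\<in>K. p (fst (E!k)) - p (snd (E!k)) = csqrt (x!k)"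
    using r[unfolded differences_realizable_def, THEN spec, of "\<lambda>k. csqrt (x!k)"] by blast
  define p' where "p' v = (if v \<in> V then p v else 0)" for v
  have "meas_map E p' \<in> meas_image V E" unfolding meas_image_def p'_def by auto
  then have "f (meas_map E p') = 0" using f(5) vanishes_on_M1_iff[OF f(1)] by blast
  moreover have "meas_map E p' ! k = x ! k" if "k \<in> K" for k
    using that K p meas_map_nth[of k E p'] ordered_graph_edge[OF og, of k] by (auto simp: p'_def)
  ultimately show False using f(2-4) by (metis length_meas_map)
qed

lemma sum_cyclic_differences:
  fixes f :: "nat \<Rightarrow> 'a::ab_group_add"
  assumes "0 < n"
  shows "(\<Sum>i<n. f i - f ((i + 1) mod n)) = 0"
proof -
  obtain n' where n: "n = Suc n'" using assms by (cases n) auto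
  have "(\<Sum>i<n'. f ((i + 1) mod n)) = (\<Sum>i<n'. f (Suc i))"
    by (rule sum.cong) (auto simp: n)
  then have "(\<Sum>i<n. f ((i + 1) mod n)) = (\<Sum>i<n'. f (Suc i)) + f 0"
    by (simp add: n)
  moreover have "(\<Sum>i<n. f i) = f 0 + (\<Sum>i<n'. f (Suc i))"
    unfolding n by (rule sum.lessThan_Suc_shift)
  ultimately show ?thesis by (simp add: sum_subtractf)
qed

lemma cycle_edge_ne_first:
  assumes "distinct vs" "3 \<le> length vs" "0 < i" "i < length vs"
  shows "{vs!i, vs!((i + 1) mod length vs)} \<noteq> {vs!0, vs!1}"
proof
  have inj: "vs!p = vs!q \<longleftrightarrow> p = q" if "p < length vs" "q < length vs" for p q
    using nth_eq_iff_index_eq[OF assms(1) that] .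
  have len: "0 < length vs" "1 < length vs" "2 < length vs" using assms(2) by auto
  assume e: "{vs!i, vs!((i + 1) mod length vs)} = {vs!0, vs!1}"
  have "vs!i \<noteq> vs!0" using inj[OF assms(4) len(1)] assms(3) by simp
  then have "vs!i = vs!1" using e by blast
  then have "i = 1" using inj[OF assms(4) len(2)] by simp
  moreover have "(1 + 1) mod length vs = 2" using assms(2) by simp
  ultimately have "{vs!1, vs!2} = {vs!0, vs!1}" using e by simp
  moreover have "vs!2 \<noteq> vs!0" "vs!2 \<noteq> vs!1"
    using inj[OF len(3) len(1)] inj[OF len(3) len(2)] by simp_all
  ultimately show False by (metis insertCI insertE singletonD)
qed

lemma cycle_supported_edge_indexing:
  assumes "cycle_supported (uedge E ` K)"
  obtains vs c where "length vs \<ge> 3" "distinct vs"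
    "\<forall>i<length vs. c i \<in> K \<and> uedge E (c i) = {vs!i, vs!((i + 1) mod length vs)}"
    "\<forall>i. 0 < i \<and> i < length vs \<longrightarrow> c i \<noteq> c 0"
proof -
  obtain vs where vs: "length vs \<ge> 3" "distinct vs"
     "uedge E ` K = {{vs!i, vs!((i + 1) mod length vs)} | i. i < length vs}"
    using assms unfolding cycle_supported_def by blast
  then have "{vs!i, vs!((i + 1) mod length vs)} \<in> uedge E ` K" if "i < length vs" for i
    using that by blast
  then have "\<forall>i. \<exists>k. i < length vs \<longrightarrow> k \<in> K \<and> uedge E k = {vs!i, vs!((i + 1) mod length vs)}"
    by (metis imageE)
  then obtain c
    where c: "\<forall>i<length vs. c i \<in> K \<and> uedge E (c i) = {vs!i, vs!((i + 1) mod length vs)}"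
    using choice[of "\<lambda>i k. i < length vs \<longrightarrow> k \<in> K \<and> uedge E k = {vs!i, vs!((i + 1) mod length vs)}"]
    by blast
  moreover have "c i \<noteq> c 0" if i: "0 < i" "i < length vs" for i
  proof
    have "0 < length vs" using vs(1) by linarith
    then have "uedge E (c 0) = {vs!0, vs!((0 + 1) mod length vs)}" using c by blast
    also have "(0 + 1) mod length vs = 1" using vs(1) by simp
    finally have "uedge E (c 0) = {vs!0, vs!1}" .
    moreover have "uedge E (c i) = {vs!i, vs!((i + 1) mod length vs)}" using c i(2) by blast
    moreover assume "c i = c 0"
    ultimately show False using cycle_edge_ne_first[OF vs(2,1) i] by simp
  qed
  ultimately show thesis using that vs(1,2) by blast
qed

lemma square_difference_doubleton:
  fixes p :: "'a \<Rightarrow> 'b::comm_ring_1"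
  shows "{a, b} = {c, d} \<Longrightarrow> (p a - p b)^2 = (p c - p d)^2"
  by (auto simp: doubleton_eq_iff power2_commute)

lemma cycle_coords_dependent:
  assumes og: "ordered_graph V E" and K: "K \<subseteq> {..<length E}"
    and cs: "cycle_supported (uedge E ` K)"
  shows "coords_dependent (M1 V E) (length E) K"
proof -
  obtain vs c where vs: "length vs \<ge> 3" "distinct vs"
    and c: "\<forall>i<length vs. c i \<in> K \<and> uedge E (c i) = {vs!i, vs!((i + 1) mod length vs)}"
    and c0: "\<forall>i. 0 < i \<and> i < length vs \<longrightarrow> c i \<noteq> c 0"
    using cycle_supported_edge_indexing[OF cs] by blast
  define n where "n = length vs"
  define m where "m = length E"
  have n0: "0 < n" using vs(1) n_def by linarith
  have cm: "\<forall>i<n. c i < m" using c K unfolding n_def m_def by auto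
  define y0 where "y0 = map (\<lambda>k. if k = c 0 then (1::complex) else 0) [0..<m]"
  have y0c: "y0 ! c i = (if i = 0 then 1 else 0)" if "i < n" for i
  proof -
    have "y0 ! c i = (if c i = c 0 then 1 else 0)" using cm that by (simp add: y0_def)
    then show ?thesis using c0 that n_def by auto
  qed
  have "(\<Sum>i<n. a i) \<noteq> 0" if roots: "\<forall>i<n. (a i)^2 = y0 ! c i" for a
  proof -
    have "\<forall>i<n. a i = (if i = 0 then a 0 else 0)" using roots y0c by auto
    then have "(\<Sum>i<n. a i) = (\<Sum>i<n. if i = 0 then a 0 else 0)" by (intro sum.cong) auto
    also have "\<dots> = a 0" using n0 by simp
    moreover have "(a 0)^2 = 1" using roots y0c[OF n0] n0 by simp
    ultimately show ?thesis by auto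
  qed
  then obtain f where f: "f \<in> poly_fun m" "\<forall>x y. (\<forall>i<n. x ! c i = y ! c i) \<longrightarrow> f x = f y"
    "\<forall>y a. (\<forall>i<n. (a i)^2 = y ! c i) \<and> (\<Sum>i<n. a i) = 0 \<longrightarrow> f y = 0" "f y0 \<noteq> 0"
    using sum_of_roots_eliminant[OF cm] by blast
  have "f z = 0" if "z \<in> meas_image V E" for z
  proof -
    obtain p where z: "z = meas_map E p"
      using \<open>z \<in> meas_image V E\<close> unfolding meas_image_def by blast
    define a where "a i = p (vs!i) - p (vs!((i + 1) mod n))" for i
    have "(a i)^2 = z ! c i" if i: "i < n" for i
    proof -
      have "z ! c i = (p (fst (E!c i)) - p (snd (E!c i)))^2"
        using z meas_map_nth[of "c i" E p] cm i m_def by simp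
      also have "\<dots> = (a i)^2"
        unfolding a_def using c i n_def by (intro square_difference_doubleton) (simp add: uedge_def)
      finally show ?thesis by simp
    qed
    moreover have "(\<Sum>i<n. a i) = 0"
      unfolding a_def using sum_cyclic_differences[OF n0, of "\<lambda>i. p (vs!i)"] by simp
    ultimately show ?thesis using f(3) by blast
  qed
  then have "\<forall>z\<in>M1 V E. f z = 0" using vanishes_on_M1_iff f(1) m_def by blast
  moreover have "f x = f y" if "\<forall>k\<in>K. x!k = y!k" for x y
    using f(2) that c n_def by simp
  moreover have "length y0 = m" by (simp add: y0_def)
  ultimately show ?thesis unfolding coords_dependent_def m_def[symmetric] using f(1,4) by blast
qed

section \<open>Realizability of edge differences on forests\<close>

lemma realizable_mono: "K' \<subseteq> K \<Longrightarrow> differences_realizable E K \<Longrightarrow> differences_realizable E K'"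
  unfolding differences_realizable_def by blast

lemma realizable_empty: "differences_realizable E {}"
  unfolding differences_realizable_def by blast

text \<open>Shifting p by a constant on S keeps the differences along the edges of K, none of which
  leaves S, and gives the edge k, which leaves S, any prescribed difference.\<close>

lemma realizable_insert_separated:
  assumes r: "differences_realizable E K"
    and k: "fst (E!k) \<in> S" "snd (E!k) \<notin> S"
    and closed: "\<forall>k'\<in>K. fst (E!k') \<in> S \<longleftrightarrow> snd (E!k') \<in> S"
  shows "differences_realizable E (insert k K)"
  unfolding differences_realizable_def
proof
  fix d :: "nat \<Rightarrow> complex"
  obtain p where p: "\<forall>k\<in>K. p (fst (E!k)) - p (snd (E!k)) = d k"
    using r unfolding differences_realizable_def by blast
  define p' where "p' w = p w + (if w \<in> S then d k - (p (fst (E!k)) - p (snd (E!k))) else 0)" for w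
  have "p' (fst (E!k)) - p' (snd (E!k)) = d k" using k by (simp add: p'_def)
  moreover have "p' (fst (E!k')) - p' (snd (E!k')) = d k'" if "k' \<in> K" for k'
    using p that closed[rule_format, OF that] by (simp add: p'_def)
  ultimately show "\<exists>p. \<forall>k'\<in>insert k K. p (fst (E!k')) - p (snd (E!k')) = d k'" by blast
qed

lemma realizable_insert_pendant:
  assumes r: "differences_realizable E K" and og: "ordered_graph V E" and k: "k < length E"
    and v: "v \<in> uedge E k" and fresh: "\<forall>k'\<in>K. v \<notin> uedge E k'"
  shows "differences_realizable E (insert k K)"
proof (rule realizable_insert_separated[OF r])
  let ?S = "if fst (E!k) = v then {v} else - {v}"
  show "fst (E!k) \<in> ?S" by simp
  show "snd (E!k) \<notin> ?S" using v ordered_graph_edge(3)[OF og k] by (auto simp: uedge_def)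
  show "\<forall>k'\<in>K. fst (E!k') \<in> ?S \<longleftrightarrow> snd (E!k') \<in> ?S" using fresh by (auto simp: uedge_def)
qed

definition path_edges :: "('a \<times> 'a) list \<Rightarrow> 'a list \<Rightarrow> nat set" where
  "path_edges E ws = {k. k < length E \<and> (\<exists>i. Suc i < length ws \<and> uedge E k = {ws!i, ws!Suc i})}"

lemma path_edges_snoc:
  "path_edges E (ws @ [w]) \<subseteq> path_edges E ws \<union> {k. k < length E \<and> uedge E k = {last ws, w}}"
proof
  fix k assume "k \<in> path_edges E (ws @ [w])"
  then obtain i where k: "k < length E" "Suc i < Suc (length ws)"
    "uedge E k = {(ws @ [w])!i, (ws @ [w])!Suc i}"
    unfolding path_edges_def by auto
  show "k \<in> path_edges E ws \<union> {k. k < length E \<and> uedge E k = {last ws, w}}"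
  proof (cases "Suc i < length ws")
    case True
    then show ?thesis using k unfolding path_edges_def by (auto simp: nth_append)
  next
    case False
    then have i: "Suc i = length ws" using k by simp
    then have "ws ! i = last ws" by (metis diff_Suc_1 last_conv_nth list.size(3) nat.distinct(1))
    then show ?thesis using k i by (simp add: nth_append)
  qed
qed

lemma realizable_path_edges:
  assumes og: "ordered_graph V E"
  shows "distinct ws \<Longrightarrow> differences_realizable E (path_edges E ws)"
proof (induction ws rule: rev_induct)
  case Nil
  then show ?case using realizable_empty by (simp add: path_edges_def)
next
  case (snoc w ws)
  have r: "differences_realizable E (path_edges E ws)" using snoc by simp
  show ?case
  proof (cases "\<exists>k0<length E. uedge E k0 = {last ws, w}")
    case False
    then have "path_edges E (ws @ [w]) \<subseteq> path_edges E ws" using path_edges_snoc by fastforce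
    then show ?thesis using realizable_mono r by blast
  next
    case True
    then obtain k0 where k0: "k0 < length E" "uedge E k0 = {last ws, w}" by blast
    have "k = k0" if "k < length E" "uedge E k = {last ws, w}" for k
      using ordered_graph_uedge_inj[OF og that(1) k0(1)] that(2) k0(2) by simp
    then have sub: "path_edges E (ws @ [w]) \<subseteq> insert k0 (path_edges E ws)"
      using path_edges_snoc by fastforce
    have "uedge E k' \<subseteq> set ws" if "k' \<in> path_edges E ws" for k'
      using that unfolding path_edges_def by auto
    then have "\<forall>k'\<in>path_edges E ws. w \<notin> uedge E k'" using snoc.prems by auto
    moreover have "w \<in> uedge E k0" using k0(2) by simp
    ultimately have "differences_realizable E (insert k0 (path_edges E ws))"
      using realizable_insert_pendant[OF r og k0(1)] by blast
    then show ?thesis using realizable_mono sub by blast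
  qed
qed

lemma rotate_consecutive:
  assumes i: "i < length vs" and j: "j < length vs" and ij: "i \<noteq> j"
  obtains l where "Suc l < length vs" "rotate (Suc j) vs ! l = vs ! i"
    "rotate (Suc j) vs ! Suc l = vs ! ((i + 1) mod length vs)"
proof -
  define n where "n = length vs"
  define l where "l = (i + n - Suc j) mod n"
  have n0: "0 < n" using j unfolding n_def by linarith
  have l: "l < n" using n0 by (simp add: l_def)
  have e1: "(Suc j + l) mod n = i"
  proof -
    have "(Suc j + l) mod n = (Suc j + (i + n - Suc j)) mod n"
      unfolding l_def by (rule mod_add_right_eq)
    also have "Suc j + (i + n - Suc j) = i + n" using j n_def by simp
    finally show ?thesis using i n_def by simp
  qed
  have Suc_l: "Suc l < n"
  proof (rule ccontr)
    assume "\<not> Suc l < n"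
    then have "l = n - 1" using l by simp
    then have "(Suc j + l) mod n = j" using n0 j n_def by (simp add: algebra_simps)
    then show False using e1 ij by simp
  qed
  have e2: "(Suc j + Suc l) mod n = (i + 1) mod n"
    using e1 by (metis add_Suc_right mod_Suc_eq Suc_eq_plus1)
  show thesis
  proof (rule that[of l])
    show "Suc l < length vs" using Suc_l n_def by simp
    show "rotate (Suc j) vs ! l = vs ! i"
      using nth_rotate[of l vs "Suc j"] l e1 n_def by simp
    show "rotate (Suc j) vs ! Suc l = vs ! ((i + 1) mod length vs)"
      using nth_rotate[of "Suc l" vs "Suc j"] Suc_l e2 n_def by simp
  qed
qed

lemma realizable_proper_subset_of_cycle:
  assumes og: "ordered_graph V E" and K: "K \<subseteq> {..<length E}"
    and cs: "cycle_supported (uedge E ` K)" and K': "K' \<subset> K"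
  shows "differences_realizable E K'"
proof -
  obtain vs where vs: "distinct vs"
     "uedge E ` K = {{vs!i, vs!((i + 1) mod length vs)} | i. i < length vs}"
    using cs unfolding cycle_supported_def by blast
  obtain k0 where k0: "k0 \<in> K" "k0 \<notin> K'" using K' by blast
  then have "uedge E k0 \<in> uedge E ` K" by blast
  then obtain j where j: "j < length vs" "uedge E k0 = {vs!j, vs!((j + 1) mod length vs)}"
    using vs(2) by auto
  have "k \<in> path_edges E (rotate (Suc j) vs)" if k: "k \<in> K'" for k
  proof -
    have km: "k < length E" using k K K' by auto
    have "uedge E k \<in> uedge E ` K" using k K' by blast
    then obtain i where i: "i < length vs" "uedge E k = {vs!i, vs!((i + 1) mod length vs)}"
      using vs(2) by auto
    have "i \<noteq> j"
    proof
      assume "i = j"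
      then have "uedge E k = uedge E k0" using i(2) j(2) by simp
      then have "k = k0" using ordered_graph_uedge_inj[OF og km] k0(1) K by blast
      then show False using k k0(2) by simp
    qed
    then obtain l where l: "Suc l < length vs" "rotate (Suc j) vs ! l = vs ! i"
      "rotate (Suc j) vs ! Suc l = vs ! ((i + 1) mod length vs)"
      using rotate_consecutive[OF i(1) j(1)] by blast
    then have "uedge E k = {rotate (Suc j) vs ! l, rotate (Suc j) vs ! Suc l}" using i(2) by simp
    then show ?thesis using km l(1) unfolding path_edges_def by auto
  qed
  moreover have "distinct (rotate (Suc j) vs)" using vs(1) by simp
  ultimately show ?thesis using realizable_path_edges[OF og] realizable_mono by blast
qed

definition edge_adjacent :: "('a \<times> 'a) list \<Rightarrow> nat set \<Rightarrow> 'a \<Rightarrow> 'a \<Rightarrow> bool" where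
  "edge_adjacent E K a b \<longleftrightarrow> (\<exists>k\<in>K. uedge E k = {a, b})"

lemma rtrancl_path_successively:
  "rtrancl_path r x xs y \<Longrightarrow> successively r (x # xs) \<and> last (x # xs) = y"
  by (induction rule: rtrancl_path.induct) (auto simp: successively_Cons)

lemma closed_walk_cycle_supported:
  assumes ws: "distinct ws" "3 \<le> length ws"
    and steps: "\<forall>i. Suc i < length ws \<longrightarrow> {ws!i, ws!Suc i} \<in> uedge E ` K"
    and closing: "{last ws, ws!0} \<in> uedge E ` K"
  shows "\<exists>K'\<subseteq>K. cycle_supported (uedge E ` K')"
proof -
  define n where "n = length ws"
  define S where "S = {{ws!i, ws!((i + 1) mod n)} | i. i < n}"
  have "cycle_supported S" unfolding cycle_supported_def S_def using ws n_def by blast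
  moreover have "S \<subseteq> uedge E ` K"
  proof
    fix e assume "e \<in> S"
    then obtain i where i: "i < n" "e = {ws!i, ws!((i + 1) mod n)}" unfolding S_def by blast
    show "e \<in> uedge E ` K"
    proof (cases "Suc i < n")
      case True
      then show ?thesis using steps i n_def by simp
    next
      case False
      then have "Suc i = n" using i(1) by simp
      then have "i = n - 1" "Suc i mod n = 0" by auto
      moreover have "ws \<noteq> []" using ws(2) n_def \<open>i < n\<close> by auto
      then have "last ws = ws!(n - 1)" by (simp add: last_conv_nth n_def)
      ultimately have "e = {last ws, ws!0}" using i(2) by simp
      then show ?thesis using closing by simp
    qed
  qed
  ultimately show ?thesis by (metis subset_image_iff)
qed

lemma connected_endpoints_cycle:
  assumes og: "ordered_graph V E" and k: "k < length E" "k \<notin> K" and K: "K \<subseteq> {..<length E}"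
    and conn: "(edge_adjacent E K)\<^sup>*\<^sup>* (snd (E!k)) (fst (E!k))"
  shows "\<exists>K'\<subseteq>insert k K. cycle_supported (uedge E ` K')"
proof -
  define u where "u = fst (E!k)"
  define v where "v = snd (E!k)"
  have uv: "uedge E k = {u, v}" "u \<noteq> v"
    using ordered_graph_edge(3)[OF og k(1)] by (auto simp: uedge_def u_def v_def)
  obtain xs where "rtrancl_path (edge_adjacent E K) v xs u" "distinct (v # xs)"
    using conn rtranclp_eq_rtrancl_path rtrancl_path_distinct unfolding u_def v_def by metis
  then obtain ws where ws: "ws \<noteq> []" "ws!0 = v" "last ws = u" "distinct ws"
    "successively (edge_adjacent E K) ws"
    using rtrancl_path_successively by (metis list.discI nth_Cons_0)
  have steps: "{ws!i, ws!Suc i} \<in> uedge E ` K" if "Suc i < length ws" for i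
    using successively_nth[OF ws(5) that] unfolding edge_adjacent_def by auto
  have "length ws \<noteq> 1"
  proof
    assume "length ws = 1"
    then have "u = v" using ws(2,3) last_conv_nth[OF ws(1)] by simp
    then show False using uv(2) by simp
  qed
  moreover have "length ws \<noteq> 2"
  proof
    assume "length ws = 2"
    then have "{v, u} \<in> uedge E ` K" using steps[of 0] ws(2,3) last_conv_nth[OF ws(1)] by simp
    moreover have "{v, u} = uedge E k" using uv(1) by blast
    ultimately obtain k' where "k' \<in> K" "uedge E k' = uedge E k" by (metis imageE)
    then show False using ordered_graph_uedge_inj[OF og _ k(1)] K k(2) by blast
  qed
  moreover have "length ws \<noteq> 0" using ws(1) by simp
  ultimately have "3 \<le> length ws" by linarith
  moreover have "{last ws, ws!0} \<in> uedge E ` insert k K" using ws(2,3) uv(1) by simp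
  ultimately show ?thesis
    using closed_walk_cycle_supported[OF ws(4), of E "insert k K"] steps by blast
qed

lemma acyclic_realizable:
  assumes og: "ordered_graph V E"
  shows "finite K \<Longrightarrow> K \<subseteq> {..<length E} \<Longrightarrow> \<forall>K'\<subseteq>K. \<not> cycle_supported (uedge E ` K') \<Longrightarrow>
    differences_realizable E K"
proof (induction K rule: finite_induct)
  case empty
  then show ?case using realizable_empty by blast
next
  case (insert k K)
  have r: "differences_realizable E K" using insert by auto
  let ?reach = "(edge_adjacent E K)\<^sup>*\<^sup>* (snd (E!k))"
  have "\<not> ?reach (fst (E!k))"
    using connected_endpoints_cycle[OF og _ insert(2)] insert(4,5) by auto
  moreover have "?reach (fst (E!k')) \<longleftrightarrow> ?reach (snd (E!k'))" if "k' \<in> K" for k'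
  proof -
    have "edge_adjacent E K (fst (E!k')) (snd (E!k'))" "edge_adjacent E K (snd (E!k')) (fst (E!k'))"
      using that unfolding edge_adjacent_def uedge_def by auto
    then show ?thesis
      using rtranclp.rtrancl_into_rtrancl[of "edge_adjacent E K" "snd (E!k)"] by blast
  qed
  ultimately show ?case
    using realizable_insert_separated[OF r, of k "- Collect ?reach"] by simp
qed

section \<open>Cycles are the circuits\<close>

lemma cycle_supported_iff_coords_circuit:
  assumes og: "ordered_graph V E" and K: "K \<subseteq> {..<length E}"
  shows "cycle_supported (uedge E ` K) \<longleftrightarrow> coords_circuit (M1 V E) (length E) K"
proof
  assume cs: "cycle_supported (uedge E ` K)"
  show "coords_circuit (M1 V E) (length E) K" unfolding coords_circuit_def
    using cycle_coords_dependent[OF og K cs] realizable_proper_subset_of_cycle[OF og K cs]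
      realizable_not_coords_dependent[OF og] K by blast
next
  assume circ: "coords_circuit (M1 V E) (length E) K"
  have "finite K" using K finite_subset by blast
  then obtain K' where K': "K' \<subseteq> K" "cycle_supported (uedge E ` K')"
    using acyclic_realizable[OF og _ K] realizable_not_coords_dependent[OF og K] circ
    unfolding coords_circuit_def by blast
  then have "K' = K"
    using cycle_coords_dependent[OF og _ K'(2)] K circ unfolding coords_circuit_def by blast
  then show "cycle_supported (uedge E ` K)" using K' by simp
qed

theorem mainTheorem14:
  fixes VG :: "'a set" and EG :: "('a \<times> 'a) list"
    and VH :: "'b set" and EH :: "('b \<times> 'b) list" and m :: nat
  assumes "ordered_graph VG EG" and "ordered_graph VH EH"
    and "length EG = m" and "length EH = m"
    and "M1 VG EG = M1 VH EH"
  shows "index_cycle_iso EG EH"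
  unfolding index_cycle_iso_def
proof (intro conjI allI impI)
  show "length EG = length EH" using assms by simp
next
  fix K assume K: "K \<subseteq> {..<length EG}"
  then have "K \<subseteq> {..<length EH}" using assms by simp
  then show "cycle_supported (uedge EG ` K) = cycle_supported (uedge EH ` K)"
    using cycle_supported_iff_coords_circuit[OF assms(1) K]
      cycle_supported_iff_coords_circuit[OF assms(2)]
      assms(3-5) by simp
qed

end
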